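(* Assume the processes $\sigma_n$ satisfy hypotheses (12) and (13) below. Fix a finite $T>0$ and a point $b\in\mathbb R^d$ with $b>0$. Then with probability one there exist a random $N<\infty$ and a random point $a\in\mathbb R^d$ such that $$\sigma_n(nx,nt)=\sup_{y\in[a,x]}\{\sigma_n(ny,0)+\mathbf H((ny,0),(nx,nt))\}$$ for all $x\in[-b,b]$, $t\in(0,T]$ and $n\ge N$.
   Context: Order: for $x,y\in\mathbb R^\nu$, $x\le y$ iff $x_i\le y_i$ for all $i$, $x<y$ iff $x_i<y_i$ for all $i$; $[a,x]=\{y:a\le y\le x\}$; $|x|_\infty=\max_i|x_i|$; $d\ge2$. $\mathbb Z^*=\mathbb Z\cup\{\pm\infty\}$. The state space $\Sigma$ is the set of functions $\sigma:\mathbb R^d\to\mathbb Z^*$ such that (i) $x\le y$ implies $\sigma(x)\le\sigma(y)$; (ii) for every cube $[-q\mathbf 1,q\mathbf 1]$ there are finite partitions $-q=s_i^0<\dots<s_i^{m_i}=q$ of each coordinate axis such that $\sigma$ is constant on each rectangle $\prod_i[s_i^{k_i},s_i^{k_i+1})$; (iii) for every $b\in\mathbb R^d$, $\lim_{M\to\infty}\sup\{|y|_\infty^{-d/(d+1)}\sigma(y):y\le b,|y|_\infty\ge M\}=-\infty$. A rate-one Poisson point process on $\mathbb R^d\times(0,\infty)$ is given; $\mathbf H((y,0),(x,t))$ is the maximal number of Poisson points on a strictly increasing chain (coordinatewise order in $\mathbb R^{d+1}$) in $\{(\eta,s):y<\eta\le x,0<s\le t\}$. Random initial states $\sigma_n(\cdot,0)\in\Sigma$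 are given on the same probability space, and $\sigma_n(x,t)=\sup_{y\le x}\{\sigma_n(y,0)+\mathbf H((y,0),(x,t))\}$ for $t>0$. Hypotheses: $u_0:\mathbb R^d\to\mathbb R$ is nondecreasing, locally Lipschitz, with $\lim_{M\to\infty}\sup\{|y|_\infty^{-d/(d+1)}u_0(y):y\le b',|y|_\infty\ge M\}=-\infty$ for every $b'$; (12) for every $y$, $n^{-1}\sigma_n(ny,0)\to u_0(y)$ a.s.; (13) for every $b'\in\mathbb R^d$ and $C>0$, a.s. there exist finite random $M,N>0$ such that $n\ge N$, $y\le b'$, $|y|_\infty\ge M$ imply $\sigma_n(ny,0)\le -Cn|y|_\infty^{d/(d+1)}$. *)

theory Defs
  imports "HOL-Analysis.Analysis" "HOL-Probability.Probability"
begin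

definition vless :: "real^'d \<Rightarrow> real^'d \<Rightarrow> bool" where
  "vless x y \<longleftrightarrow> (\<forall>i. x $ i < y $ i)"

definition supnorm :: "real^'d \<Rightarrow> real" where
  "supnorm x = Max (range (\<lambda>i. \<bar>x $ i\<bar>))"

definition poisson_pp :: "'w measure \<Rightarrow> ('w \<Rightarrow> ((real^'d) \<times> real) set) \<Rightarrow> bool" where
  "poisson_pp M P \<longleftrightarrow>
     (\<forall>\<omega>\<in>space M. P \<omega> \<subseteq> UNIV \<times> {0<..} \<and> (\<forall>A. bounded A \<longrightarrow> finite (P \<omega> \<inter> A))) \<and>
     (\<forall>A. A \<in> sets lborel \<and> bounded A \<and> A \<subseteq> UNIV \<times> {0<..} \<longrightarrow>
        (\<lambda>\<omega>. card (P \<omega> \<inter> A)) \<in> measurable M (count_space UNIV) \<and>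
        (\<forall>k::nat. measure M {\<omega>\<in>space M. card (P \<omega> \<inter> A) = k}
            = measure lborel A ^ k / fact k * exp (- measure lborel A))) \<and>
     (\<forall>(I::nat set) A. finite I \<and> disjoint_family_on A I \<and>
        (\<forall>i\<in>I. A i \<in> sets lborel \<and> bounded (A i) \<and> A i \<subseteq> UNIV \<times> {0<..}) \<longrightarrow>
        prob_space.indep_vars M (\<lambda>_. count_space UNIV) (\<lambda>i \<omega>. card (P \<omega> \<inter> A i)) I)"

definition strict_chain :: "((real^'d) \<times> real) set \<Rightarrow> bool" where
  "strict_chain C \<longleftrightarrow> (\<forall>p\<in>C. \<forall>q\<in>C. p \<noteq> q \<longrightarrow>
      (vless (fst p) (fst q) \<and> snd p < snd q) \<or> (vless (fst q) (fst p) \<and> snd q < snd p))"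

text \<open>H((y,0),(x,t)): maximal number of points of P on a strictly increasing chain in
  {(\<eta>,s): y < \<eta> \<le> x, 0 < s \<le> t}.\<close>
definition lpp_H :: "((real^'d) \<times> real) set \<Rightarrow> real^'d \<Rightarrow> real^'d \<Rightarrow> real \<Rightarrow> ereal" where
  "lpp_H P y x t = (SUP C \<in> {C. finite C \<and> strict_chain C \<and>
        C \<subseteq> P \<inter> {(\<eta>, s). vless y \<eta> \<and> \<eta> \<le> x \<and> 0 < s \<and> s \<le> t}}.
        ereal (real (card C)))"

definition lpp_evolve :: "((real^'d) \<times> real) set \<Rightarrow> (real^'d \<Rightarrow> ereal) \<Rightarrow> real^'d \<Rightarrow> real \<Rightarrow> ereal" where
  "lpp_evolve P \<sigma>0 x t = (SUP y \<in> {y. y \<le> x}. \<sigma>0 y + lpp_H P y x t)"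

definition state_space :: "(real^'d \<Rightarrow> ereal) set" where
  "state_space = {\<sigma>.
     (\<forall>x. \<sigma> x \<in> range (\<lambda>k::int. ereal (real_of_int k)) \<union> {\<infinity>, -\<infinity>}) \<and>
     mono \<sigma> \<and>
     (\<forall>q>0. \<exists>S :: 'd \<Rightarrow> real set. (\<forall>i. finite (S i) \<and> S i \<subseteq> {-q..q} \<and> -q \<in> S i \<and> q \<in> S i) \<and>
        (\<forall>x y. (\<forall>i. -q \<le> x $ i \<and> x $ i < q \<and> -q \<le> y $ i \<and> y $ i < q \<and>
                    (\<forall>s\<in>S i. s \<le> x $ i \<longleftrightarrow> s \<le> y $ i)) \<longrightarrow> \<sigma> x = \<sigma> y)) \<and>
     (\<forall>b. ((\<lambda>M::real. SUP y \<in> {y. y \<le> b \<and> supnorm y \<ge> M}.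
              ereal (supnorm y powr (- real CARD('d) / (real CARD('d) + 1))) * \<sigma> y)
           \<longlongrightarrow> -\<infinity>) at_top)}"

definition locally_lipschitz :: "(real^'d \<Rightarrow> real) \<Rightarrow> bool" where
  "locally_lipschitz u \<longleftrightarrow> (\<forall>x. \<exists>r>0. \<exists>L. \<forall>y\<in>ball x r. \<forall>z\<in>ball x r. \<bar>u y - u z\<bar> \<le> L * dist y z)"

end

theory Submission
  imports Defs
begin

text \<open>The points of a strictly increasing chain in a box are visited in order by a monotone
  lattice path through an \<open>r \<times> \<dots> \<times> r\<close> grid of the box, so they lie in the \<open>(d+1)(r-1)+1\<close>
  cells of that path.  As there are at most \<open>(d+1)^((d+1)(r-1))\<close> such paths, the Poisson tail
  bound makes a chain with more than \<open>L r\<close> points an event of probability at most \<open>2^-r\<close>.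
  With \<open>r \<approx> n s^(d/(d+1))\<close> steps in the box \<open>(-ns, ns]^d \<times> (0, nT]\<close>, Borel-Cantelli over \<open>n\<close>
  and \<open>s = 4^j\<close> gives, almost surely for all large \<open>n\<close>, \<open>H((ny,0),(nx,nt)) = O(n |y|^(d/(d+1)))\<close>
  uniformly in \<open>x \<in> [-b,b]\<close> and \<open>t \<le> T\<close>.  Hypothesis (13) with a larger constant therefore
  drives \<open>\<sigma>\<^sub>n(ny,0) + H((ny,0),(nx,nt))\<close> below \<open>-n |y|^(d/(d+1))\<close> for far away \<open>y\<close>, whereas
  \<open>\<sigma>\<^sub>n(-nb,0) \<ge> n (u\<^sub>0(-b) - 1)\<close> by (12); so starting points outside a large box \<open>[a,x]\<close>
  never attain the supremum.\<close>

lemma count_list_replicate: "count_list (replicate n i) x = (if i = x then n else 0)"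
  by (induction n) auto

lemma ex_list_count_list:
  fixes f :: "'a::finite \<Rightarrow> nat"
  shows "\<exists>w. count_list w = f"
proof -
  obtain ls :: "'a list" where ls: "distinct ls" "set ls = UNIV"
    using finite_distinct_list[of "UNIV :: 'a set"] by auto
  have "count_list (concat (map (\<lambda>i. replicate (f i) i) ls)) x = f x" for x
  proof -
    have "count_list (concat (map (\<lambda>i. replicate (f i) i) ls)) x
        = (\<Sum>i\<in>set ls. if i = x then f i else 0)"
      using ls(1) by (simp add: count_list_concat o_def count_list_replicate sum_list_distinct_conv_sum_set)
    then show ?thesis using ls(2) by simp
  qed
  then show ?thesis by blast
qed

lemma finite_chain_has_greatest:
  fixes S :: "'a::order set"
  assumes "finite S" "S \<noteq> {}" "Complete_Partial_Order.chain (\<le>) S"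
  obtains m where "m \<in> S" "\<And>c. c \<in> S \<Longrightarrow> c \<le> m"
proof -
  obtain m where m: "m \<in> S" "\<forall>c\<in>S. m \<le> c \<longrightarrow> c = m"
    using finite_has_maximal[OF assms(1,2)] by blast
  have "c \<le> m" if "c \<in> S" for c
  proof -
    have "m \<le> c \<or> c \<le> m"
      using assms(3) m(1) that unfolding Complete_Partial_Order.chain_def by blast
    then show "c \<le> m" using m(2) that by auto
  qed
  then show ?thesis using that m(1) by blast
qed

text \<open>A word \<open>w\<close> over \<open>'a\<close> encodes the monotone lattice path in \<open>'a \<Rightarrow> nat\<close> whose
  \<open>k\<close>-th vertex is \<open>count_list (take k w)\<close>.\<close>

lemma chain_on_lattice_path:
  fixes S :: "('a::finite \<Rightarrow> nat) set"
  assumes "finite S" "Complete_Partial_Order.chain (\<le>) S" "\<forall>c\<in>S. c \<le> e"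
  shows "\<exists>w. count_list w = e \<and> (\<forall>c\<in>S. \<exists>k\<le>length w. count_list (take k w) = c)"
  using assms
proof (induction S arbitrary: e rule: finite_psubset_induct)
  case (psubset S)
  show ?case
  proof (cases "S = {}")
    case True
    then show ?thesis using ex_list_count_list[of e] by auto
  next
    case False
    then obtain m where m: "m \<in> S" and below_m: "\<And>c. c \<in> S \<Longrightarrow> c \<le> m"
      using finite_chain_has_greatest[OF psubset.hyps(1) _ psubset.prems(1)] by blast
    have "S - {m} \<subset> S" using m(1) by blast
    moreover have "Complete_Partial_Order.chain (\<le>) (S - {m})"
      using psubset.prems(1) by (rule chain_subset) blast
    moreover have "\<forall>c\<in>S - {m}. c \<le> m" using below_m by blast
    ultimately have "\<exists>u. count_list u = m \<and> (\<forall>c\<in>S - {m}. \<exists>k\<le>length u. count_list (take k u) = c)"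
      by (rule psubset.IH)
    then obtain u where u: "count_list u = m"
      "\<forall>c\<in>S - {m}. \<exists>k\<le>length u. count_list (take k u) = c"
      by blast
    obtain v where v: "count_list v = (\<lambda>x. e x - m x)"
      using ex_list_count_list by blast
    have me: "m x \<le> e x" for x using psubset.prems(2) m(1) by (auto simp: le_fun_def)
    show ?thesis
    proof (intro exI[of _ "u @ v"] conjI ballI)
      show "count_list (u @ v) = e" using u(1) v me by (auto simp: fun_eq_iff)
      fix c assume "c \<in> S"
      then consider "c = m" | "c \<in> S - {m}" by blast
      then show "\<exists>k\<le>length (u @ v). count_list (take k (u @ v)) = c"
      proof cases
        case 1
        then show ?thesis using u(1) by (intro exI[of _ "length u"]) auto
      next
        case 2
        then obtain k where "k \<le> length u" "count_list (take k u) = c" using u(2) by blast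
        then show ?thesis by (intro exI[of _ k]) auto
      qed
    qed
  qed
qed

section \<open>Covering strict chains by cells along a lattice path\<close>

text \<open>Cells are indexed by \<open>'d option \<Rightarrow> nat\<close>: \<open>Some i\<close> is the \<open>i\<close>-th space coordinate and
  \<open>None\<close> the time coordinate.  The cell with index \<open>c\<close> is half open in time, so that it
  lies in the domain \<open>UNIV \<times> {0<..}\<close> of the point process.\<close>

definition grid_cell :: "real^'d \<Rightarrow> real \<Rightarrow> real \<Rightarrow> ('d option \<Rightarrow> nat) \<Rightarrow> ((real^'d) \<times> real) set" where
  "grid_cell lo h \<tau> c =
     cbox ((\<chi> i. lo$i + real (c (Some i)) * h), real (c None) * \<tau>)
          ((\<chi> i. lo$i + (real (c (Some i)) + 1) * h), (real (c None) + 1) * \<tau>)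
     \<inter> UNIV \<times> {real (c None) * \<tau><..}"

definition grid_box :: "real^'d \<Rightarrow> real \<Rightarrow> real \<Rightarrow> nat \<Rightarrow> ((real^'d) \<times> real) set" where
  "grid_box lo h \<tau> r =
     {p. (\<forall>i. lo$i < fst p$i \<and> fst p$i \<le> lo$i + real r * h) \<and> 0 < snd p \<and> snd p \<le> real r * \<tau>}"

definition grid_index :: "real \<Rightarrow> real \<Rightarrow> nat" where
  "grid_index h x = nat (\<lceil>x / h\<rceil> - 1)"

definition cell_index :: "real^'d \<Rightarrow> real \<Rightarrow> real \<Rightarrow> (real^'d) \<times> real \<Rightarrow> 'd option \<Rightarrow> nat" where
  "cell_index lo h \<tau> p = case_option (grid_index \<tau> (snd p)) (\<lambda>i. grid_index h (fst p$i - lo$i))"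

definition path_cells :: "real^'d \<Rightarrow> real \<Rightarrow> real \<Rightarrow> 'd option list \<Rightarrow> ((real^'d) \<times> real) set" where
  "path_cells lo h \<tau> w = (\<Union>k\<le>length w. grid_cell lo h \<tau> (count_list (take k w)))"

lemma grid_index_bounds:
  assumes "h > 0" "0 < x" "x \<le> real r * h"
  shows "real (grid_index h x) * h < x" "x \<le> (real (grid_index h x) + 1) * h"
    "grid_index h x \<le> r - 1"
proof -
  define v where "v = x / h"
  have v: "0 < v" "v \<le> real r" using assms by (simp_all add: v_def pos_divide_le_eq)
  have c0: "\<lceil>v\<rceil> \<ge> 1" using v zero_less_ceiling[of v] by linarith
  have e: "real (grid_index h x) = real_of_int \<lceil>v\<rceil> - 1" using c0 by (simp add: grid_index_def v_def)
  have a: "real_of_int \<lceil>v\<rceil> - 1 < v" "v \<le> real_of_int \<lceil>v\<rceil>" by (auto simp: ceiling_correct)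
  have xv: "x = v * h" using assms by (simp add: v_def)
  show "real (grid_index h x) * h < x" using a e xv assms(1) by simp
  show "x \<le> (real (grid_index h x) + 1) * h" using a e xv assms(1) by (simp add: mult_right_mono)
  have "\<lceil>v\<rceil> \<le> int r" using v by (simp add: ceiling_le_iff)
  then show "grid_index h x \<le> r - 1" using c0 by (simp add: grid_index_def v_def)
qed

lemma grid_index_mono: "h > 0 \<Longrightarrow> x \<le> y \<Longrightarrow> grid_index h x \<le> grid_index h y"
  unfolding grid_index_def by (intro nat_mono diff_right_mono ceiling_mono divide_right_mono) auto

lemma cell_index_mono:
  assumes "h > 0" "\<tau> > 0" "vless (fst p) (fst q)" "snd p < snd q"
  shows "cell_index lo h \<tau> p \<le> cell_index lo h \<tau> q"
  unfolding le_fun_def cell_index_def using assms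
  by (auto split: option.split intro!: grid_index_mono simp: vless_def less_imp_le)

lemma cell_index_in_grid_box:
  fixes lo :: "real^'d"
  assumes "h > 0" "\<tau> > 0" "p \<in> grid_box lo h \<tau> r"
  shows "p \<in> grid_cell lo h \<tau> (cell_index lo h \<tau> p)" "cell_index lo h \<tau> p \<le> (\<lambda>_. r - 1)"
proof -
  obtain \<eta> s where p: "p = (\<eta>, s)" by force
  have box: "\<forall>i. lo$i < \<eta>$i \<and> \<eta>$i \<le> lo$i + real r * h" and qs: "0 < s" "s \<le> real r * \<tau>"
    using assms(3) by (auto simp: grid_box_def p)
  have q: "0 < \<eta>$i - lo$i" "\<eta>$i - lo$i \<le> real r * h" for i
    using spec[OF box, of i] by linarith+
  note I = grid_index_bounds[OF assms(1) q] and J = grid_index_bounds[OF assms(2) qs]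
  have I1: "lo$i + real (grid_index h (\<eta>$i - lo$i)) * h \<le> \<eta>$i" for i using I(1)[of i] by linarith
  show "p \<in> grid_cell lo h \<tau> (cell_index lo h \<tau> p)"
    unfolding grid_cell_def p cell_index_def using I I1 J
    by (auto simp: interval_cbox_cart[symmetric] less_eq_vec_def algebra_simps)
  show "cell_index lo h \<tau> p \<le> (\<lambda>_. r - 1)"
    unfolding le_fun_def cell_index_def p using I(3) J(3) by (auto split: option.split)
qed

lemma strict_chain_in_path_cells:
  fixes C :: "((real^'d) \<times> real) set" and lo :: "real^'d"
  assumes "h > 0" "\<tau> > 0" "finite C" "strict_chain C" "C \<subseteq> grid_box lo h \<tau> r"
  obtains w where "length w = CARD('d option) * (r - 1)" "C \<subseteq> path_cells lo h \<tau> w"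
proof -
  let ?S = "cell_index lo h \<tau> ` C"
  have "Complete_Partial_Order.chain (\<le>) ?S"
    unfolding Complete_Partial_Order.chain_def
    using assms(4) cell_index_mono[OF assms(1,2)] unfolding strict_chain_def by fastforce
  moreover have "\<forall>c\<in>?S. c \<le> (\<lambda>_. r - 1)"
    using cell_index_in_grid_box(2)[OF assms(1,2)] assms(5) by blast
  ultimately obtain w where w: "count_list w = (\<lambda>_. r - 1)"
    "\<forall>c\<in>?S. \<exists>k\<le>length w. count_list (take k w) = c"
    using chain_on_lattice_path[of ?S] assms(3) by blast
  have "length w = CARD('d option) * (r - 1)"
    using sum_count_set[of w UNIV] w(1) by simp
  moreover have "C \<subseteq> path_cells lo h \<tau> w"
  proof
    fix p assume p: "p \<in> C"
    then obtain k where k: "k \<le> length w" "count_list (take k w) = cell_index lo h \<tau> p"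
      using w(2) by blast
    have "p \<in> grid_box lo h \<tau> r" using p assms(5) by blast
    from cell_index_in_grid_box(1)[OF assms(1,2) this]
    have "p \<in> grid_cell lo h \<tau> (count_list (take k w))" using k(2) by simp
    then show "p \<in> path_cells lo h \<tau> w" using k(1) unfolding path_cells_def by blast
  qed
  ultimately show ?thesis using that by blast
qed

section \<open>Poisson tails of cell unions\<close>

definition poisson_window :: "((real^'d) \<times> real) set \<Rightarrow> bool" where
  "poisson_window A \<longleftrightarrow> A \<in> sets lborel \<and> bounded A \<and> A \<subseteq> UNIV \<times> {0<..}"

lemma poisson_window_grid_cell:
  assumes "h > 0" "\<tau> > 0"
  shows "poisson_window (grid_cell lo h \<tau> c)"
proof -
  have "open (UNIV \<times> {real (c None) * \<tau><..} :: ((real^'d) \<times> real) set)"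
    by (intro open_Times) auto
  then have "(UNIV \<times> {real (c None) * \<tau><..} :: ((real^'d) \<times> real) set) \<in> sets lborel"
    unfolding sets_lborel by (rule borel_open)
  then have "grid_cell lo h \<tau> c \<in> sets lborel"
    unfolding grid_cell_def by (intro sets.Int borel_closed) auto
  moreover have "bounded (grid_cell lo h \<tau> c)"
    unfolding grid_cell_def by (intro bounded_Int) auto
  moreover have "real (c None) * \<tau> \<ge> 0" using assms by simp
  then have "grid_cell lo h \<tau> c \<subseteq> UNIV \<times> {0<..}"
    unfolding grid_cell_def by auto
  ultimately show ?thesis unfolding poisson_window_def by blast
qed

lemma measure_grid_cell_le:
  fixes lo :: "real^'d"
  assumes "h > 0" "\<tau> > 0"
  shows "measure lborel (grid_cell lo h \<tau> c) \<le> h ^ CARD('d) * \<tau>"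
proof -
  define a :: "real^'d" where "a = (\<chi> i. lo$i + real (c (Some i)) * h)"
  define b :: "real^'d" where "b = (\<chi> i. lo$i + (real (c (Some i)) + 1) * h)"
  define \<alpha> where "\<alpha> = real (c None) * \<tau>"
  define \<beta> where "\<beta> = (real (c None) + 1) * \<tau>"
  have "measure lborel (grid_cell lo h \<tau> c) \<le> measure lborel (cbox (a, \<alpha>) (b, \<beta>))"
    using poisson_window_grid_cell[OF assms, of lo c]
    by (intro measure_mono_fmeasurable)
       (auto simp: grid_cell_def a_def b_def \<alpha>_def \<beta>_def poisson_window_def)
  also have "\<dots> = measure lborel (cbox a b) * measure lborel (cbox \<alpha> \<beta>)" by (rule content_Pair)
  also have "measure lborel (cbox a b) = (\<Prod>i\<in>UNIV. b$i - a$i)"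
    by (rule content_cbox_cart)
       (use assms in \<open>auto simp: a_def b_def interval_cbox_cart[symmetric] less_eq_vec_def\<close>)
  also have "\<dots> = h ^ CARD('d)" by (simp add: a_def b_def algebra_simps)
  also have "measure lborel (cbox \<alpha> \<beta>) = \<tau>" using assms by (simp add: \<alpha>_def \<beta>_def algebra_simps)
  finally show ?thesis .
qed

lemma poisson_window_path_cells:
  assumes "h > 0" "\<tau> > 0"
  shows "poisson_window (path_cells lo h \<tau> w)"
  using poisson_window_grid_cell[OF assms] unfolding poisson_window_def path_cells_def by blast

lemma measure_path_cells_le:
  fixes lo :: "real^'d"
  assumes "h > 0" "\<tau> > 0"
  shows "measure lborel (path_cells lo h \<tau> w) \<le> real (length w + 1) * (h ^ CARD('d) * \<tau>)"
proof -
  have "measure lborel (path_cells lo h \<tau> w)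
      \<le> (\<Sum>k\<le>length w. measure lborel (grid_cell lo h \<tau> (count_list (take k w))))"
    unfolding path_cells_def
    by (rule measure_UNION_le) (use poisson_window_grid_cell[OF assms] in \<open>auto simp: poisson_window_def\<close>)
  also have "\<dots> \<le> (\<Sum>k\<le>length w. h ^ CARD('d) * \<tau>)"
    by (intro sum_mono measure_grid_cell_le[OF assms])
  finally show ?thesis by simp
qed

lemma exp_partial_sum_tail_le:
  fixes l :: real
  assumes "0 \<le> l"
  shows "1 - (\<Sum>k<m. l ^ k / fact k) * exp (- l) \<le> l ^ m / fact m"
proof -
  obtain t where t: "\<bar>t\<bar> \<le> \<bar>l\<bar>" "exp l = (\<Sum>k<m. l ^ k / fact k) + exp t / fact m * l ^ m"
    using Maclaurin_exp_le[of l m] by blast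
  have "1 - (\<Sum>k<m. l ^ k / fact k) * exp (- l) = (exp l - (\<Sum>k<m. l ^ k / fact k)) * exp (- l)"
    by (simp add: left_diff_distrib exp_minus_inverse)
  also have "\<dots> = exp t * exp (- l) * (l ^ m / fact m)" using t(2) by simp
  also have "\<dots> \<le> 1 * (l ^ m / fact m)"
    using t(1) assms by (intro mult_right_mono) (auto simp: mult_exp_exp)
  finally show ?thesis by simp
qed

lemma poisson_pp_locally_finite:
  assumes "poisson_pp M P" "\<omega> \<in> space M" "bounded A"
  shows "finite (P \<omega> \<inter> A)"
proof -
  have "\<forall>\<omega>\<in>space M. P \<omega> \<subseteq> UNIV \<times> {0<..} \<and> (\<forall>A. bounded A \<longrightarrow> finite (P \<omega> \<inter> A))"
    using assms(1) unfolding poisson_pp_def by (rule conjunct1)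
  then show ?thesis using assms(2,3) by blast
qed

lemma poisson_pp_card_ge:
  assumes M: "prob_space M" and P: "poisson_pp M P" and A: "poisson_window A"
  shows "{\<omega>\<in>space M. m \<le> card (P \<omega> \<inter> A)} \<in> sets M"
    "measure M {\<omega>\<in>space M. m \<le> card (P \<omega> \<inter> A)} \<le> measure lborel A ^ m / fact m"
proof -
  interpret prob_space M by (rule M)
  define f where "f = (\<lambda>\<omega>. card (P \<omega> \<inter> A))"
  define l where "l = measure lborel A"
  have f: "f \<in> measurable M (count_space UNIV)" and
    dist: "\<And>k. prob {\<omega>\<in>space M. f \<omega> = k} = l ^ k / fact k * exp (- l)"
    using P A unfolding poisson_pp_def poisson_window_def f_def l_def by blast+
  have level: "{\<omega>\<in>space M. f \<omega> = k} \<in> sets M" for k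
  proof -
    have "f -` {k} \<inter> space M \<in> sets M" by (rule measurable_sets[OF f]) simp
    moreover have "f -` {k} \<inter> space M = {\<omega>\<in>space M. f \<omega> = k}" by auto
    ultimately show ?thesis by simp
  qed
  define U where "U = (\<Union>k\<in>{..<m}. {\<omega>\<in>space M. f \<omega> = k})"
  have U: "U \<in> sets M" unfolding U_def using level by auto
  have eq: "{\<omega>\<in>space M. m \<le> card (P \<omega> \<inter> A)} = space M - U"
    by (auto simp: U_def f_def)
  show "{\<omega>\<in>space M. m \<le> card (P \<omega> \<inter> A)} \<in> sets M" using eq U by auto
  have "prob U = (\<Sum>k<m. prob {\<omega>\<in>space M. f \<omega> = k})"
    unfolding U_def
    by (rule finite_measure_finite_Union) (use level in \<open>auto simp: disjoint_family_on_def\<close>)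
  also have "\<dots> = (\<Sum>k<m. l ^ k / fact k) * exp (- l)" using dist by (simp add: sum_distrib_right)
  finally have prob_U: "prob U = (\<Sum>k<m. l ^ k / fact k) * exp (- l)" .
  have "prob {\<omega>\<in>space M. m \<le> card (P \<omega> \<inter> A)} = prob (space M - U)"
    by (simp only: eq)
  also have "\<dots> = 1 - (\<Sum>k<m. l ^ k / fact k) * exp (- l)"
    by (simp only: prob_compl[OF U] prob_U)
  also have "\<dots> \<le> l ^ m / fact m"
    by (rule exp_partial_sum_tail_le) (simp add: l_def)
  finally show "prob {\<omega>\<in>space M. m \<le> card (P \<omega> \<inter> A)} \<le> measure lborel A ^ m / fact m"
    unfolding l_def .
qed

lemma power_div_fact_le_exp:
  fixes x :: real
  assumes "0 \<le> x"
  shows "x ^ m / fact m \<le> exp x"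
proof -
  obtain t where t: "exp x = (\<Sum>k<Suc m. x ^ k / fact k) + exp t / fact (Suc m) * x ^ Suc m"
    using Maclaurin_exp_le[of x "Suc m"] by blast
  have "x ^ m / fact m \<le> (\<Sum>k<Suc m. x ^ k / fact k)"
    by (rule member_le_sum) (use assms in auto)
  moreover have "0 \<le> exp t / fact (Suc m) * x ^ Suc m" using assms by simp
  ultimately show ?thesis using t by linarith
qed

lemma power_div_fact_le_half_power:
  fixes K c \<mu> :: real and m r :: nat
  assumes K: "1 \<le> K" and c: "0 \<le> c" and \<mu>: "0 \<le> \<mu>" "\<mu> \<le> c * r"
    and m: "(2 * exp 1 * c * K + 1) * r \<le> m" and r: "1 \<le> r"
  shows "K ^ r * (\<mu> ^ m / fact m) \<le> (1/2) ^ r"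
proof -
  define L where "L = 2 * exp 1 * c * K + 1"
  define q where "q = exp 1 * c / L"
  have L: "1 \<le> L" using K c by (simp add: L_def)
  have mL: "L * real r \<le> real m" using m by (simp add: L_def)
  have Lr: "0 < L * real r" using L r by (simp add: zero_less_mult_iff)
  have "1 * real r \<le> L * real r" by (rule mult_right_mono[OF L]) simp
  then have mr: "real r \<le> real m" "0 < real m" using mL r by linarith+
  have q0: "0 \<le> q" using c L by (simp add: q_def)
  have "exp 1 * c * K \<le> L / 2" by (simp add: L_def)
  then have "K * q \<le> 1/2" using L by (simp add: q_def pos_divide_le_eq mult_ac)
  note q = q0 this
  have "1 * q \<le> K * q" by (rule mult_right_mono[OF K q0])
  then have q1: "q \<le> 1" using q by linarith
  have "\<mu> ^ m / fact m = (\<mu> / m) ^ m * (real m ^ m / fact m)"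
    using mr by (simp add: power_divide)
  also have "\<dots> \<le> (\<mu> / m) ^ m * exp (real m)"
    by (rule mult_left_mono[OF power_div_fact_le_exp]) (use \<mu> in auto)
  also have "\<dots> = (exp 1 * (\<mu> / m)) ^ m"
  proof -
    have "exp (real m) = exp 1 ^ m" using exp_of_nat_mult[of m 1] by simp
    then show ?thesis by (simp only: power_mult_distrib mult.commute)
  qed
  also have "\<dots> \<le> q ^ m"
  proof (rule power_mono)
    have "\<mu> / m \<le> c * r / (L * r)"
      by (rule frac_le) (use \<mu> mL Lr c r in auto)
    also have "\<dots> = c / L" using r by simp
    finally show "exp 1 * (\<mu> / m) \<le> q"
      unfolding q_def times_divide_eq_right[symmetric] by (rule mult_left_mono) simp
  qed (use \<mu> in auto)
  also have "\<dots> \<le> q ^ r" by (rule power_decreasing) (use mr q q1 in auto)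
  finally have "\<mu> ^ m / fact m \<le> q ^ r" .
  then have "K ^ r * (\<mu> ^ m / fact m) \<le> K ^ r * q ^ r"
    by (rule mult_left_mono) (use K in simp)
  also have "\<dots> = (K * q) ^ r" by (simp add: power_mult_distrib)
  also have "\<dots> \<le> (1/2) ^ r" by (rule power_mono) (use q K in auto)
  finally show ?thesis .
qed

lemma scaled_cell_volume_le:
  fixes D r :: nat and n s T \<theta> :: real
  assumes r: "0 < r" and n: "0 \<le> n" and s: "1 \<le> s" and T: "0 \<le> T"
    and \<theta>: "\<theta> * (real D + 1) = real D" and rs: "n * s powr \<theta> \<le> r"
  shows "(2 * (n * s) / r) ^ D * (n * T / r) \<le> 2 ^ D * T"
proof -
  have "(s powr \<theta>) ^ (D + 1) = (s powr \<theta>) powr real (D + 1)"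
    by (rule powr_realpow[symmetric]) (use s in simp)
  also have "\<dots> = s powr real D" using \<theta> by (simp add: powr_powr add.commute)
  also have "\<dots> = s ^ D" by (rule powr_realpow) (use s in simp)
  finally have "n ^ (D + 1) * s ^ D = (n * s powr \<theta>) ^ (D + 1)" by (simp add: power_mult_distrib)
  also have "\<dots> \<le> real r ^ (D + 1)" by (rule power_mono[OF rs]) (use n s in simp)
  finally have key: "n ^ (D + 1) * s ^ D \<le> real r ^ (D + 1)" .
  have "(2 * (n * s) / r) ^ D * (n * T / r) = 2 ^ D * T * (n ^ (D + 1) * s ^ D) / real r ^ (D + 1)"
    by (simp add: power_divide power_mult_distrib field_simps)
  also have "\<dots> \<le> 2 ^ D * T * real r ^ (D + 1) / real r ^ (D + 1)"
    by (intro divide_right_mono mult_left_mono key) (use T in auto)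
  also have "\<dots> = 2 ^ D * T" using r by simp
  finally show ?thesis .
qed

lemma real_nat_ceiling_bounds:
  fixes x :: real
  assumes "0 \<le> x"
  shows "x \<le> real (nat \<lceil>x\<rceil>)" "real (nat \<lceil>x\<rceil>) \<le> x + 1"
  using assms by (simp_all add: le_of_int_ceiling of_int_ceiling_le_add_one)

lemma nat_ceiling_add_bounds:
  fixes x :: real and n j :: nat
  assumes n: "1 \<le> n" and x: "real j + 1 \<le> x"
  shows "real n * x \<le> real (nat \<lceil>real n * x\<rceil> + n + j)"
    "real (nat \<lceil>real n * x\<rceil> + n + j) \<le> 3 * real n * x"
proof -
  have "real n * x \<le> real (nat \<lceil>real n * x\<rceil>)" "real (nat \<lceil>real n * x\<rceil>) \<le> real n * x + 1"
    using n x by (simp_all add: real_nat_ceiling_bounds)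
  moreover have "x \<le> real n * x" "real n \<le> real n * x"
    using n x by (simp_all add: mult_le_cancel_right1 mult_le_cancel_left1)
  ultimately show "real n * x \<le> real (nat \<lceil>real n * x\<rceil> + n + j)"
    "real (nat \<lceil>real n * x\<rceil> + n + j) \<le> 3 * real n * x"
    using x by linarith+
qed

text \<open>The left-hand side bounds a union over the \<open>(D+1)^((D+1)(r-1))\<close> lattice paths of Poisson
  tails, each path covering \<open>(D+1)(r-1)+1\<close> cells of side \<open>2ns/r\<close> and height \<open>nT/r\<close>.\<close>

lemma path_count_tail_le_half_power:
  fixes D r m :: nat and n s T \<theta> L :: real
  assumes r: "1 \<le> r" and n: "0 \<le> n" and s: "1 \<le> s" and T: "0 \<le> T"
    and \<theta>: "\<theta> * (real D + 1) = real D" and rs: "n * s powr \<theta> \<le> r"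
    and L: "2 * exp 1 * (real (D + 1) * 2 ^ D * T) * real ((D + 1) ^ (D + 1)) + 1 \<le> L"
    and m: "L * r \<le> m"
  shows "real ((D + 1) ^ ((D + 1) * (r - 1)))
      * ((real ((D + 1) * (r - 1) + 1) * ((2 * (n * s) / r) ^ D * (n * T / r))) ^ m / fact m)
    \<le> (1/2) ^ r"
proof -
  define K where "K = real ((D + 1) ^ (D + 1))"
  define c where "c = real (D + 1) * 2 ^ D * T"
  define \<mu> where "\<mu> = real ((D + 1) * (r - 1) + 1) * ((2 * (n * s) / r) ^ D * (n * T / r))"
  have K: "1 \<le> K" "real ((D + 1) ^ ((D + 1) * (r - 1))) \<le> K ^ r"
  proof -
    have "(D + 1) ^ ((D + 1) * (r - 1)) \<le> (D + 1) ^ ((D + 1) * r)"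
      by (intro power_increasing mult_le_mono2) auto
    then show "real ((D + 1) ^ ((D + 1) * (r - 1))) \<le> K ^ r"
      unfolding K_def of_nat_power[symmetric] power_mult[symmetric] of_nat_le_iff .
    have "1 \<le> (D + 1) ^ (D + 1)" by (rule one_le_power) simp
    then show "1 \<le> K" unfolding K_def by (metis of_nat_1 of_nat_le_iff)
  qed
  have \<mu>: "0 \<le> \<mu>" "\<mu> \<le> c * r"
  proof -
    have "(D + 1) * (r - 1) + 1 \<le> (D + 1) * r" using r by (cases r) auto
    then have len: "real ((D + 1) * (r - 1) + 1) \<le> real (D + 1) * r"
      by (simp only: of_nat_mult[symmetric] of_nat_le_iff)
    have "\<mu> \<le> (real (D + 1) * r) * (2 ^ D * T)"
      unfolding \<mu>_def
      by (rule mult_mono[OF len scaled_cell_volume_le[OF _ n s T \<theta> rs]]) (use r n s T in simp_all)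
    then show "\<mu> \<le> c * r" by (simp add: c_def mult_ac)
  qed (use r n s T in \<open>simp add: \<mu>_def\<close>)
  have "(2 * exp 1 * c * K + 1) * r \<le> L * r"
    using L by (intro mult_right_mono) (auto simp: c_def K_def)
  with m have "(2 * exp 1 * c * K + 1) * r \<le> m" by linarith
  then have "K ^ r * (\<mu> ^ m / fact m) \<le> (1/2) ^ r"
    using power_div_fact_le_half_power[OF K(1) _ \<mu>] r T by (simp add: c_def)
  moreover have "real ((D + 1) ^ ((D + 1) * (r - 1))) * (\<mu> ^ m / fact m) \<le> K ^ r * (\<mu> ^ m / fact m)"
    by (rule mult_right_mono[OF K(2)]) (use \<mu>(1) in simp)
  ultimately show ?thesis unfolding \<mu>_def by linarith
qed

lemma four_power_powr_ge:
  fixes \<theta> :: real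
  assumes "1/2 \<le> \<theta>"
  shows "real j + 1 \<le> ((4::real) ^ j) powr \<theta>"
proof -
  have "real j + 1 \<le> 2 ^ j"
  proof (induction j)
    case (Suc j)
    have "(1::real) \<le> 2 ^ j" by simp
    then show ?case using Suc by simp
  qed simp
  also have "(2::real) ^ j = ((4::real) ^ j) powr (1/2)"
    by (simp add: powr_half_sqrt real_sqrt_power flip: power2_eq_square)
  also have "\<dots> \<le> ((4::real) ^ j) powr \<theta>" by (rule powr_mono[OF assms]) simp
  finally show ?thesis .
qed

lemma exists_power_between:
  fixes q s :: real
  assumes "1 < q" "1 \<le> s"
  shows "\<exists>j::nat. s \<le> q ^ j \<and> q ^ j \<le> q * s"
proof -
  obtain k :: nat where "s < q ^ k" using real_arch_pow[OF assms(1)] by blast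
  then have ex: "\<exists>k::nat. s \<le> q ^ k" by (blast intro: less_imp_le)
  define j where "j = (LEAST k::nat. s \<le> q ^ k)"
  have j: "s \<le> q ^ j" unfolding j_def by (rule LeastI_ex[OF ex])
  have "q ^ j \<le> q * s"
  proof (cases j)
    case 0
    have "1 * 1 \<le> q * s" using assms by (intro mult_mono) auto
    then show ?thesis using 0 by simp
  next
    case (Suc k)
    then have "\<not> s \<le> q ^ k" using not_less_Least[of k "\<lambda>k. s \<le> q ^ k"] unfolding j_def by simp
    then show ?thesis using Suc assms by simp
  qed
  then show ?thesis using j by blast
qed

section \<open>Long chains of Poisson points are rare\<close>

definition chains_in :: "((real^'d) \<times> real) set \<Rightarrow> ((real^'d) \<times> real) set set" where
  "chains_in A = {C. finite C \<and> strict_chain C \<and> C \<subseteq> A}"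

definition centred_box :: "real \<Rightarrow> real \<Rightarrow> ((real^'d) \<times> real) set" where
  "centred_box s t = {p. (\<forall>i. - s < fst p$i \<and> fst p$i \<le> s) \<and> 0 < snd p \<and> snd p \<le> t}"

definition chain_count_bound :: "((real^'d) \<times> real) set \<Rightarrow> real \<Rightarrow> real \<Rightarrow> real \<Rightarrow> nat \<Rightarrow> bool" where
  "chain_count_bound Pw T \<Lambda> \<theta> n \<longleftrightarrow> (\<forall>j. \<forall>C\<in>chains_in (Pw \<inter> centred_box (real n * 4 ^ j) (real n * T)).
     real (card C) \<le> \<Lambda> * real n * ((4::real) ^ j) powr \<theta>)"

lemma chains_in_mono: "A \<subseteq> B \<Longrightarrow> chains_in A \<subseteq> chains_in B"
  unfolding chains_in_def by blast

lemma centred_box_eq_grid_box: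
  assumes "0 < r"
  shows "centred_box s t = grid_box (\<chi> i. - s) (2 * s / r) (t / r) r"
  using assms by (auto simp: centred_box_def grid_box_def)

lemma long_chain_event_grid_box:
  fixes M :: "'w measure" and P :: "'w \<Rightarrow> ((real^'d) \<times> real) set" and lo :: "real^'d"
  assumes M: "prob_space M" and P: "poisson_pp M P" and h: "h > 0" "\<tau> > 0"
  obtains E where "E \<in> sets M"
    "measure M E \<le> real (CARD('d option) ^ (CARD('d option) * (r - 1)))
        * ((real (CARD('d option) * (r - 1) + 1) * (h ^ CARD('d) * \<tau>)) ^ m / fact m)"
    "\<And>\<omega> C. \<omega> \<in> space M - E \<Longrightarrow> C \<in> chains_in (P \<omega> \<inter> grid_box lo h \<tau> r) \<Longrightarrow> card C < m"
proof -
  interpret prob_space M by (rule M)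
  define W where "W = {w :: 'd option list. set w \<subseteq> UNIV \<and> length w = CARD('d option) * (r - 1)}"
  define G where "G w = {\<omega>\<in>space M. m \<le> card (P \<omega> \<inter> path_cells lo h \<tau> w)}" for w
  define E where "E = (\<Union>w\<in>W. G w)"
  define \<mu> where "\<mu> = real (CARD('d option) * (r - 1) + 1) * (h ^ CARD('d) * \<tau>)"
  have W: "finite W" "card W = CARD('d option) ^ (CARD('d option) * (r - 1))"
    unfolding W_def by (rule finite_lists_length_eq, simp) (subst card_lists_length_eq, simp_all)
  have G: "G w \<in> sets M" "prob (G w) \<le> measure lborel (path_cells lo h \<tau> w) ^ m / fact m" for w
    unfolding G_def using poisson_pp_card_ge[OF M P poisson_window_path_cells[OF h]] by auto
  have "E \<in> sets M" unfolding E_def using W(1) G(1) by auto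
  moreover have "prob E \<le> real (card W) * (\<mu> ^ m / fact m)"
  proof -
    have "prob E \<le> (\<Sum>w\<in>W. prob (G w))"
      unfolding E_def by (rule finite_measure_subadditive_finite) (use W(1) G(1) in auto)
    also have "\<dots> \<le> (\<Sum>w\<in>W. \<mu> ^ m / fact m)"
    proof (rule sum_mono)
      fix w assume "w \<in> W"
      then have "measure lborel (path_cells lo h \<tau> w) \<le> \<mu>"
        using measure_path_cells_le[OF h, of lo w] by (simp add: W_def \<mu>_def)
      then have "measure lborel (path_cells lo h \<tau> w) ^ m / fact m \<le> \<mu> ^ m / fact m"
        by (intro divide_right_mono power_mono) auto
      then show "prob (G w) \<le> \<mu> ^ m / fact m" using G(2)[of w] by linarith
    qed
    finally show ?thesis by simp
  qed
  moreover have "card C < m" if \<omega>: "\<omega> \<in> space M - E" and C: "C \<in> chains_in (P \<omega> \<inter> grid_box lo h \<tau> r)" for \<omega> C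
  proof -
    have "finite C" "strict_chain C" "C \<subseteq> grid_box lo h \<tau> r" using C by (simp_all add: chains_in_def)
    then obtain w where w: "length w = CARD('d option) * (r - 1)" "C \<subseteq> path_cells lo h \<tau> w"
      by (rule strict_chain_in_path_cells[OF h])
    have "finite (P \<omega> \<inter> path_cells lo h \<tau> w)"
      using poisson_pp_locally_finite[OF P] \<omega> poisson_window_path_cells[OF h, of lo w]
      unfolding poisson_window_def by blast
    then have "card C \<le> card (P \<omega> \<inter> path_cells lo h \<tau> w)"
      using C w(2) by (intro card_mono) (auto simp: chains_in_def)
    also have "\<dots> < m" using \<omega> w(1) unfolding E_def G_def W_def by auto
    finally show ?thesis .
  qed
  ultimately show ?thesis using that W(2) by (simp add: \<mu>_def)
qed

lemma long_chain_event_centred_box: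
  fixes M :: "'w measure" and P :: "'w \<Rightarrow> ((real^'d) \<times> real) set" and n j :: nat and T L :: real
  assumes M: "prob_space M" and P: "poisson_pp M P" and T: "T > 0" and n: "n \<ge> 1"
    and L: "2 * exp 1 * (real (CARD('d) + 1) * 2 ^ CARD('d) * T) * real ((CARD('d) + 1) ^ (CARD('d) + 1)) + 1 \<le> L"
  shows "\<exists>E\<in>sets M. measure M E \<le> (1/2) ^ (n + j) \<and>
    (\<forall>\<omega>\<in>space M - E. \<forall>C\<in>chains_in (P \<omega> \<inter> centred_box (real n * 4 ^ j) (real n * T)).
       real (card C) \<le> 3 * L * real n * ((4::real) ^ j) powr (real CARD('d) / (real CARD('d) + 1)))"
proof -
  define D where "D = CARD('d)"
  define \<theta> where "\<theta> = real D / (real D + 1)"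
  define s :: real where "s = 4 ^ j"
  \<comment> \<open>\<open>r \<ge> n s^\<theta>\<close> keeps the cell volume bounded, \<open>r \<ge> n + j\<close> makes the
    failure probabilities summable over \<open>n\<close> and \<open>j\<close>\<close>
  define r where "r = nat \<lceil>n * s powr \<theta>\<rceil> + n + j"
  define m where "m = nat \<lceil>L * r\<rceil>"
  define h where "h = 2 * (n * s) / r"
  define \<tau> where "\<tau> = n * T / r"
  have \<theta>: "\<theta> * (real D + 1) = real D" "1/2 \<le> \<theta>"
    by (auto simp: \<theta>_def D_def field_simps Suc_le_eq)
  have s: "1 \<le> s" "real j + 1 \<le> s powr \<theta>"
    using four_power_powr_ge[OF \<theta>(2)] by (auto simp: s_def)
  note r = nat_ceiling_add_bounds[OF n s(2), folded r_def]
  have r1: "1 \<le> r" using n by (simp add: r_def)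
  have "0 \<le> 2 * exp 1 * (real (CARD('d) + 1) * 2 ^ CARD('d) * T) * real ((CARD('d) + 1) ^ (CARD('d) + 1))"
    using T by simp
  then have L1: "1 \<le> L" using L by linarith
  have h: "h > 0" "\<tau> > 0" using n r1 T by (auto simp: h_def \<tau>_def s_def)
  obtain E where E: "E \<in> sets M"
    "measure M E \<le> real (CARD('d option) ^ (CARD('d option) * (r - 1)))
        * ((real (CARD('d option) * (r - 1) + 1) * (h ^ CARD('d) * \<tau>)) ^ m / fact m)"
    "\<And>\<omega> C. \<omega> \<in> space M - E \<Longrightarrow> C \<in> chains_in (P \<omega> \<inter> grid_box (\<chi> i. - (n * s)) h \<tau> r) \<Longrightarrow> card C < m"
    using long_chain_event_grid_box[OF M P h] by blast
  have "CARD('d option) = D + 1" by (simp add: D_def)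
  with E(2) have "measure M E \<le> real ((D + 1) ^ ((D + 1) * (r - 1)))
        * ((real ((D + 1) * (r - 1) + 1) * (h ^ D * \<tau>)) ^ m / fact m)"
    by (simp only: D_def)
  also have "\<dots> \<le> (1/2) ^ r"
    unfolding h_def \<tau>_def
  proof (rule path_count_tail_le_half_power[OF r1 _ s(1) _ \<theta>(1) r(1)])
    show "L * real r \<le> real m" unfolding m_def using L1 by (simp add: real_nat_ceiling_bounds)
  qed (use L T in \<open>simp_all add: D_def\<close>)
  also have "\<dots> \<le> (1/2) ^ (n + j)" by (rule power_decreasing) (auto simp: r_def)
  finally have "measure M E \<le> (1/2) ^ (n + j)" .
  moreover have "real (card C) \<le> 3 * L * n * s powr \<theta>"
    if "\<omega> \<in> space M - E" "C \<in> chains_in (P \<omega> \<inter> centred_box (n * s) (n * T))" for \<omega> C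
  proof -
    have "0 < r" using r1 by simp
    then have "C \<in> chains_in (P \<omega> \<inter> grid_box (\<chi> i. - (n * s)) h \<tau> r)"
      using that(2) by (simp only: centred_box_eq_grid_box h_def \<tau>_def)
    then have "card C < m" by (rule E(3)[OF that(1)])
    then have "real (card C) < L * r" unfolding m_def by linarith
    also have "\<dots> \<le> L * (3 * n * s powr \<theta>)" using r(2) L1 by simp
    finally show ?thesis by simp
  qed
  ultimately show ?thesis using E(1) unfolding s_def \<theta>_def D_def by blast
qed

lemma AE_eventually_notin_double_family:
  assumes M: "prob_space M" and E: "\<And>n j. E n j \<in> sets M" "\<And>n j. measure M (E n j) \<le> (1/2) ^ (n + j)"
  shows "AE \<omega> in M. eventually (\<lambda>n. \<forall>j. \<omega> \<notin> E n j) sequentially"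
proof -
  interpret prob_space M by (rule M)
  define F where "F n = (\<Union>j. E n j)" for n
  have F: "F n \<in> sets M" for n unfolding F_def using E(1) by auto
  have prob_F: "prob (F n) \<le> 2 * (1/2) ^ n" for n
  proof -
    have geo: "(\<lambda>j. (1/2::real) ^ (n + j)) sums ((1/2) ^ n * 2)"
      using sums_mult[OF geometric_sums[of "1/2::real"], of "(1/2) ^ n"] by (simp add: power_add)
    have "summable (\<lambda>j. prob (E n j))"
      by (rule summable_comparison_test'[OF sums_summable[OF geo], of 0]) (use E(2) in simp)
    then have "prob (F n) \<le> (\<Sum>j. prob (E n j))"
      unfolding F_def by (intro finite_measure_subadditive_countably) (use E(1) in auto)
    also have "\<dots> \<le> (\<Sum>j. (1/2::real) ^ (n + j))"
      by (intro suminf_le E(2) \<open>summable (\<lambda>j. prob (E n j))\<close> sums_summable[OF geo])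
    finally show ?thesis using sums_unique[OF geo] by simp
  qed
  have "summable (\<lambda>n. prob (F n))"
    by (rule summable_comparison_test'[of "\<lambda>n. 2 * (1/2::real) ^ n" 0])
       (use prob_F in \<open>auto intro: summable_mult summable_geometric\<close>)
  then have "AE \<omega> in M. eventually (\<lambda>n. \<omega> \<in> space M - F n) sequentially"
    by (intro borel_cantelli_AE1 F) (auto simp: less_top[symmetric])
  then show ?thesis by eventually_elim (auto elim: eventually_mono simp: F_def)
qed

lemma chain_growth_AE:
  fixes M :: "'w measure" and P :: "'w \<Rightarrow> ((real^'d) \<times> real) set" and T :: real
  assumes M: "prob_space M" and P: "poisson_pp M P" and T: "T > 0"
  shows "\<exists>\<Lambda>>0. AE \<omega> in M.
    eventually (chain_count_bound (P \<omega>) T \<Lambda> (real CARD('d) / (real CARD('d) + 1))) sequentially"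
proof -
  define L where "L = 2 * exp 1 * (real (CARD('d) + 1) * 2 ^ CARD('d) * T) * real ((CARD('d) + 1) ^ (CARD('d) + 1)) + 1"
  define good where "good n j \<omega> \<longleftrightarrow> (\<forall>C\<in>chains_in (P \<omega> \<inter> centred_box (real n * 4 ^ j) (real n * T)).
             real (card C) \<le> 3 * L * real n * ((4::real) ^ j) powr (real CARD('d) / (real CARD('d) + 1)))"
    for n j \<omega>
  have "\<forall>n j. \<exists>E\<in>sets M. measure M E \<le> (1/2) ^ (Suc n + j) \<and> (\<forall>\<omega>\<in>space M - E. good (Suc n) j \<omega>)"
    unfolding good_def by (intro allI long_chain_event_centred_box[OF M P T]) (simp_all add: L_def)
  then obtain E where E: "\<And>n j. E n j \<in> sets M" "\<And>n j. measure M (E n j) \<le> (1/2) ^ (Suc n + j)"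
    "\<And>n j. \<forall>\<omega>\<in>space M - E n j. good (Suc n) j \<omega>"
    by metis
  have "measure M (E n j) \<le> (1/2) ^ (n + j)" for n j
  proof -
    have "measure M (E n j) * 2 \<le> (1/2) ^ (n + j)" using E(2)[of n j] by simp
    then show ?thesis using measure_nonneg[of M "E n j"] by linarith
  qed
  then have "AE \<omega> in M. eventually (\<lambda>n. \<forall>j. \<omega> \<notin> E n j) sequentially"
    by (intro AE_eventually_notin_double_family[OF M E(1)])
  then have "AE \<omega> in M. eventually (\<lambda>n. \<forall>j. good (Suc n) j \<omega>) sequentially"
    using AE_space by eventually_elim (use E(3) in \<open>auto elim: eventually_mono\<close>)
  then have "AE \<omega> in M. eventually (\<lambda>n. \<forall>j. good n j \<omega>) sequentially"
    by eventually_elim (erule eventually_sequentially_Suc[THEN iffD1])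
  moreover have "0 < 3 * L" using T by (simp add: L_def add_pos_nonneg)
  ultimately show ?thesis unfolding good_def chain_count_bound_def by blast
qed

section \<open>Sublinear growth of the last-passage time\<close>

definition lpp_H_growth_bound :: "((real^'d) \<times> real) set \<Rightarrow> real \<Rightarrow> real \<Rightarrow> real \<Rightarrow> nat \<Rightarrow> bool" where
  "lpp_H_growth_bound Pw T \<Lambda> \<theta> n \<longleftrightarrow> (\<forall>x y t Y. t \<le> T \<and> 1 \<le> Y \<and> (\<forall>i. - Y \<le> y$i \<and> x$i \<le> Y) \<longrightarrow>
     lpp_H Pw (real n *\<^sub>R y) (real n *\<^sub>R x) (real n * t) \<le> ereal (\<Lambda> * real n * Y powr \<theta>))"

lemma lpp_H_eq_SUP_chains_in:
  "lpp_H Pw y x t =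
     (SUP C\<in>chains_in (Pw \<inter> {(\<eta>, s). vless y \<eta> \<and> \<eta> \<le> x \<and> 0 < s \<and> s \<le> t}). ereal (real (card C)))"
  by (simp add: lpp_H_def chains_in_def)

lemma lpp_H_nonneg: "0 \<le> lpp_H Pw y x t"
  unfolding lpp_H_eq_SUP_chains_in
  by (rule SUP_upper2[of "{}"]) (auto simp: chains_in_def strict_chain_def)

lemma lpp_region_subset_centred_box:
  fixes n :: nat and x y :: "real^'d"
  assumes "Y \<le> s" "\<forall>i. - Y \<le> y$i \<and> x$i \<le> Y" "t \<le> T"
  shows "{(\<eta>, \<tau>). vless (real n *\<^sub>R y) \<eta> \<and> \<eta> \<le> real n *\<^sub>R x \<and> 0 < \<tau> \<and> \<tau> \<le> real n * t}
    \<subseteq> centred_box (real n * s) (real n * T)"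
proof -
  have "- (real n * s) < \<eta>$i \<and> \<eta>$i \<le> real n * s"
    if "vless (real n *\<^sub>R y) \<eta>" "\<eta> \<le> real n *\<^sub>R x" for \<eta> i
  proof
    have yx: "- s \<le> y$i" "x$i \<le> s" using assms(1) spec[OF assms(2), of i] by linarith+
    have "real n * (- s) \<le> real n * y$i" using yx by (intro mult_left_mono) auto
    also have "\<dots> < \<eta>$i" using that(1) by (simp add: vless_def)
    finally show "- (real n * s) < \<eta>$i" by simp
    have "\<eta>$i \<le> real n * x$i" using that(2) by (simp add: less_eq_vec_def)
    also have "\<dots> \<le> real n * s" using yx by (intro mult_left_mono) auto
    finally show "\<eta>$i \<le> real n * s" .
  qed
  moreover have "real n * t \<le> real n * T" using assms(3) by (simp add: mult_left_mono)
  ultimately show ?thesis unfolding centred_box_def by fastforce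
qed

lemma lpp_H_le_of_chain_bound:
  fixes Pw :: "((real^'d) \<times> real) set" and n :: nat and x y :: "real^'d"
  assumes chains: "chain_count_bound Pw T \<Lambda> \<theta> n"
    and \<Lambda>: "0 \<le> \<Lambda>" and \<theta>: "0 \<le> \<theta>" "\<theta> \<le> 1" and t: "t \<le> T" and Y: "1 \<le> Y"
    and xy: "\<forall>i. - Y \<le> y$i \<and> x$i \<le> Y"
  shows "lpp_H Pw (real n *\<^sub>R y) (real n *\<^sub>R x) (real n * t) \<le> ereal (4 * \<Lambda> * real n * Y powr \<theta>)"
proof -
  obtain j :: nat where j: "Y \<le> 4 ^ j" "(4::real) ^ j \<le> 4 * Y"
    using exists_power_between[of 4 Y] Y by auto
  have "((4::real) ^ j) powr \<theta> \<le> (4 * Y) powr \<theta>" by (rule powr_mono2) (use \<theta> j in auto)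
  also have "\<dots> = 4 powr \<theta> * Y powr \<theta>" using Y by (simp add: powr_mult)
  also have "\<dots> \<le> 4 * Y powr \<theta>"
  proof (rule mult_right_mono)
    show "(4::real) powr \<theta> \<le> 4" using powr_mono[OF \<theta>(2), of 4] by simp
  qed simp
  finally have pow: "((4::real) ^ j) powr \<theta> \<le> 4 * Y powr \<theta>" .
  show ?thesis unfolding lpp_H_eq_SUP_chains_in
  proof (rule SUP_least)
    fix C assume C: "C \<in> chains_in (Pw \<inter> {(\<eta>, s). vless (real n *\<^sub>R y) \<eta> \<and> \<eta> \<le> real n *\<^sub>R x \<and> 0 < s \<and> s \<le> real n * t})"
    have "C \<in> chains_in (Pw \<inter> centred_box (real n * 4 ^ j) (real n * T))"
      by (rule subsetD[OF chains_in_mono[OF Int_mono[OF order_refl lpp_region_subset_centred_box[OF j(1) xy t]]] C])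
    then have "real (card C) \<le> \<Lambda> * real n * ((4::real) ^ j) powr \<theta>"
      using chains unfolding chain_count_bound_def by blast
    also have "\<dots> \<le> \<Lambda> * real n * (4 * Y powr \<theta>)" by (intro mult_left_mono pow) (use \<Lambda> in auto)
    finally show "ereal (real (card C)) \<le> ereal (4 * \<Lambda> * real n * Y powr \<theta>)" by (simp add: mult_ac)
  qed
qed

lemma lpp_H_growth_AE:
  fixes M :: "'w measure" and P :: "'w \<Rightarrow> ((real^'d) \<times> real) set" and T :: real
  assumes M: "prob_space M" and P: "poisson_pp M P" and T: "T > 0"
  shows "\<exists>\<Lambda>>0. AE \<omega> in M.
    eventually (lpp_H_growth_bound (P \<omega>) T \<Lambda> (real CARD('d) / (real CARD('d) + 1))) sequentially"
proof -
  obtain \<Lambda> where \<Lambda>: "\<Lambda> > 0" and chains: "AE \<omega> in M.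
      eventually (chain_count_bound (P \<omega>) T \<Lambda> (real CARD('d) / (real CARD('d) + 1))) sequentially"
    using chain_growth_AE[OF M P T] by blast
  have "0 \<le> real CARD('d) / (real CARD('d) + 1)" "real CARD('d) / (real CARD('d) + 1) \<le> 1" by auto
  with chains \<Lambda> have "AE \<omega> in M.
      eventually (lpp_H_growth_bound (P \<omega>) T (4 * \<Lambda>) (real CARD('d) / (real CARD('d) + 1))) sequentially"
    unfolding lpp_H_growth_bound_def by (auto elim!: eventually_mono intro!: lpp_H_le_of_chain_bound)
  then show ?thesis using \<Lambda> by (intro exI[of _ "4 * \<Lambda>"]) auto
qed

section \<open>Localisation of the variational formula\<close>

lemma supnorm_ge_abs: "\<bar>y$i\<bar> \<le> supnorm y"
  unfolding supnorm_def by (rule Max_ge) auto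

lemma ereal_mult_less_of_less_divide:
  fixes z :: ereal and n c :: real
  assumes "0 < n" "ereal c < z / ereal n"
  shows "ereal (n * c) < z"
  using assms by (cases z) (auto simp: field_simps)

lemma lpp_evolve_scaled_eq_SUP:
  fixes Pw :: "((real^'d) \<times> real) set" and \<sigma> :: "real^'d \<Rightarrow> ereal" and a c x :: "real^'d"
  assumes n: "0 < n" and c: "c \<in> {a..x}"
    and far: "\<And>y. y \<le> x \<Longrightarrow> \<not> a \<le> y \<Longrightarrow> \<sigma> (n *\<^sub>R y) + lpp_H Pw (n *\<^sub>R y) (n *\<^sub>R x) s \<le> \<sigma> (n *\<^sub>R c)"
  shows "lpp_evolve Pw \<sigma> (n *\<^sub>R x) s = (SUP y\<in>{a..x}. \<sigma> (n *\<^sub>R y) + lpp_H Pw (n *\<^sub>R y) (n *\<^sub>R x) s)"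
proof -
  have "{z. z \<le> n *\<^sub>R x} = (\<lambda>y. n *\<^sub>R y) ` {y. y \<le> x}"
  proof (intro set_eqI iffI)
    fix z assume "z \<in> {z. z \<le> n *\<^sub>R x}"
    then have "z = n *\<^sub>R ((1 / n) *\<^sub>R z)" "(1 / n) *\<^sub>R z \<le> x"
      using n by (auto simp: less_eq_vec_def field_simps)
    then show "z \<in> (\<lambda>y. n *\<^sub>R y) ` {y. y \<le> x}" by blast
  next
    fix z assume "z \<in> (\<lambda>y. n *\<^sub>R y) ` {y. y \<le> x}"
    then show "z \<in> {z. z \<le> n *\<^sub>R x}" using n by (auto simp: less_eq_vec_def)
  qed
  then have "lpp_evolve Pw \<sigma> (n *\<^sub>R x) s = (SUP y\<in>{y. y \<le> x}. \<sigma> (n *\<^sub>R y) + lpp_H Pw (n *\<^sub>R y) (n *\<^sub>R x) s)"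
    unfolding lpp_evolve_def by (simp add: image_image)
  also have "\<dots> = (SUP y\<in>{a..x}. \<sigma> (n *\<^sub>R y) + lpp_H Pw (n *\<^sub>R y) (n *\<^sub>R x) s)"
  proof (rule SUP_eq)
    fix y assume y: "y \<in> {y. y \<le> x}"
    show "\<exists>y'\<in>{a..x}. \<sigma> (n *\<^sub>R y) + lpp_H Pw (n *\<^sub>R y) (n *\<^sub>R x) s
        \<le> \<sigma> (n *\<^sub>R y') + lpp_H Pw (n *\<^sub>R y') (n *\<^sub>R x) s"
    proof (cases "a \<le> y")
      case True
      then show ?thesis using y by auto
    next
      case False
      have "\<sigma> (n *\<^sub>R c) \<le> \<sigma> (n *\<^sub>R c) + lpp_H Pw (n *\<^sub>R c) (n *\<^sub>R x) s"
        using add_left_mono[OF lpp_H_nonneg] by (metis add.right_neutral)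
      then show ?thesis using far[OF _ False] y c by (blast intro: order_trans)
    qed
  qed auto
  finally show ?thesis .
qed

lemma lpp_far_start_le:
  fixes Pw :: "((real^'d) \<times> real) set" and \<sigma> :: "real^'d \<Rightarrow> ereal" and n :: nat and b x y :: "real^'d"
  assumes \<theta>: "0 < \<theta>"
    and H: "lpp_H_growth_bound Pw T \<Lambda> \<theta> n"
    and far: "\<forall>y. y \<le> b \<and> K \<le> supnorm y \<longrightarrow>
      \<sigma> (real n *\<^sub>R y) \<le> ereal (- (\<Lambda> + 1) * real n * supnorm y powr \<theta>)"
    and A: "max K (max (supnorm b) (max 1 ((1 + \<bar>u\<bar>) powr (1 / \<theta>)))) \<le> A"
    and x: "x \<le> b" and t: "t \<le> T" and y: "y \<le> x" "\<not> (\<chi> i. - A) \<le> y"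
  shows "\<sigma> (real n *\<^sub>R y) + lpp_H Pw (real n *\<^sub>R y) (real n *\<^sub>R x) (real n * t) \<le> ereal (real n * (u - 1))"
proof -
  define Y where "Y = supnorm y"
  obtain i where "y$i < - A" using y(2) by (auto simp: less_eq_vec_def not_le)
  then have "A < Y" using supnorm_ge_abs[of y i] by (simp add: Y_def)
  then have Y: "1 \<le> Y" "K \<le> Y" "supnorm b \<le> Y" "(1 + \<bar>u\<bar>) powr (1 / \<theta>) \<le> Y"
    using A by auto
  have "1 + \<bar>u\<bar> = ((1 + \<bar>u\<bar>) powr (1 / \<theta>)) powr \<theta>" using \<theta> by (simp add: powr_powr)
  also have "\<dots> \<le> Y powr \<theta>" by (rule powr_mono2) (use \<theta> Y(4) in auto)
  finally have Y\<theta>: "1 - u \<le> Y powr \<theta>" by linarith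
  have box: "\<forall>i. - Y \<le> y$i \<and> x$i \<le> Y"
  proof
    fix i
    have "- Y \<le> y$i" "b$i \<le> supnorm b" "x$i \<le> b$i"
      using supnorm_ge_abs[of y i] supnorm_ge_abs[of b i] x
      by (auto simp: Y_def abs_le_iff less_eq_vec_def)
    then show "- Y \<le> y$i \<and> x$i \<le> Y" using Y(3) by linarith
  qed
  have "y \<le> b" using y(1) x by auto
  then have "\<sigma> (real n *\<^sub>R y) + lpp_H Pw (real n *\<^sub>R y) (real n *\<^sub>R x) (real n * t)
      \<le> ereal (- (\<Lambda> + 1) * real n * Y powr \<theta>) + ereal (\<Lambda> * real n * Y powr \<theta>)"
    using H far Y(1,2) box t unfolding lpp_H_growth_bound_def by (intro add_mono) (auto simp: Y_def)
  also have "\<dots> = ereal (real n * (- (Y powr \<theta>)))" by (simp add: algebra_simps)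
  also have "\<dots> \<le> ereal (real n * (u - 1))"
    using mult_left_mono[OF Y\<theta>, of "real n"] by (simp add: algebra_simps)
  finally show ?thesis .
qed

lemma lpp_evolve_eq_SUP_eventually:
  fixes Pw :: "((real^'d) \<times> real) set" and \<sigma> :: "nat \<Rightarrow> real^'d \<Rightarrow> ereal" and b :: "real^'d"
  assumes \<theta>: "0 < \<theta>"
    and H: "eventually (lpp_H_growth_bound Pw T \<Lambda> \<theta>) sequentially"
    and far: "eventually (\<lambda>n. \<forall>y. y \<le> b \<and> K \<le> supnorm y \<longrightarrow>
      \<sigma> n (real n *\<^sub>R y) \<le> ereal (- (\<Lambda> + 1) * real n * supnorm y powr \<theta>)) sequentially"
    and near: "(\<lambda>n. \<sigma> n (real n *\<^sub>R (- b)) / ereal (real n)) \<longlonglongrightarrow> ereal u"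
  shows "\<exists>a. eventually (\<lambda>n. \<forall>x\<in>{-b..b}. \<forall>t\<in>{0<..T}.
    lpp_evolve Pw (\<sigma> n) (real n *\<^sub>R x) (real n * t)
      = (SUP y\<in>{a..x}. \<sigma> n (real n *\<^sub>R y) + lpp_H Pw (real n *\<^sub>R y) (real n *\<^sub>R x) (real n * t))) sequentially"
proof
  define A where "A = max K (max (supnorm b) (max 1 ((1 + \<bar>u\<bar>) powr (1 / \<theta>))))"
  have a_le: "(\<chi> i. - A) \<le> - b" using supnorm_ge_abs[of b]
    by (auto simp: A_def less_eq_vec_def abs_le_iff le_max_iff_disj)
  have "eventually (\<lambda>n. ereal (u - 1) < \<sigma> n (real n *\<^sub>R (- b)) / ereal (real n)) sequentially"
    by (rule order_tendstoD(1)[OF near]) simp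
  with eventually_gt_at_top[of 0]
  have near': "eventually (\<lambda>n. 0 < n \<and> ereal (real n * (u - 1)) < \<sigma> n (real n *\<^sub>R (- b))) sequentially"
    by eventually_elim (auto intro: ereal_mult_less_of_less_divide)
  show "eventually (\<lambda>n. \<forall>x\<in>{-b..b}. \<forall>t\<in>{0<..T}.
    lpp_evolve Pw (\<sigma> n) (real n *\<^sub>R x) (real n * t)
      = (SUP y\<in>{\<chi> i. - A..x}. \<sigma> n (real n *\<^sub>R y) + lpp_H Pw (real n *\<^sub>R y) (real n *\<^sub>R x) (real n * t))) sequentially"
    using H far near'
  proof eventually_elim
    case (elim n)
    show ?case
    proof (intro ballI)
      fix x t assume x: "x \<in> {-b..b}" and t: "t \<in> {0<..T}"
      have "- b \<in> {\<chi> i. - A..x}" using x a_le by auto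
      then show "lpp_evolve Pw (\<sigma> n) (real n *\<^sub>R x) (real n * t)
        = (SUP y\<in>{\<chi> i. - A..x}. \<sigma> n (real n *\<^sub>R y) + lpp_H Pw (real n *\<^sub>R y) (real n *\<^sub>R x) (real n * t))"
      proof (rule lpp_evolve_scaled_eq_SUP[rotated])
        show "0 < real n" using elim(3) by simp
        fix y assume "y \<le> x" "\<not> (\<chi> i. - A) \<le> y"
        then have "\<sigma> n (real n *\<^sub>R y) + lpp_H Pw (real n *\<^sub>R y) (real n *\<^sub>R x) (real n * t)
            \<le> ereal (real n * (u - 1))"
          using x t by (intro lpp_far_start_le[OF \<theta> elim(1,2)]) (auto simp: A_def)
        also have "\<dots> \<le> \<sigma> n (real n *\<^sub>R (- b))" using elim(3) less_imp_le by blast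
        finally show "\<sigma> n (real n *\<^sub>R y) + lpp_H Pw (real n *\<^sub>R y) (real n *\<^sub>R x) (real n * t)
            \<le> \<sigma> n (real n *\<^sub>R (- b))" .
      qed
    qed
  qed
qed

theorem lemma8p1:
  fixes M :: "'w measure"
    and P :: "'w \<Rightarrow> ((real^'d) \<times> real) set"
    and sig0 :: "nat \<Rightarrow> 'w \<Rightarrow> real^'d \<Rightarrow> ereal"
    and u0 :: "real^'d \<Rightarrow> real"
    and T :: real and b :: "real^'d"
  assumes "prob_space M"
    and "CARD('d) \<ge> 2"
    and "poisson_pp M P"
    and "\<forall>n. \<forall>\<omega>\<in>space M. sig0 n \<omega> \<in> state_space"
    and "mono u0" and "locally_lipschitz u0"
    and "\<forall>b'. ((\<lambda>K::real. SUP y \<in> {y. y \<le> b' \<and> supnorm y \<ge> K}.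
              ereal (supnorm y powr (- real CARD('d) / (real CARD('d) + 1)) * u0 y))
           \<longlongrightarrow> -\<infinity>) at_top"
    and hyp12: "\<forall>y. AE \<omega> in M.
          (\<lambda>n. sig0 n \<omega> (real n *\<^sub>R y) / ereal (real n)) \<longlonglongrightarrow> ereal (u0 y)"
    and hyp13: "\<forall>b' (C::real). C > 0 \<longrightarrow> (AE \<omega> in M. \<exists>K>0. \<exists>N::nat. N > 0 \<and>
          (\<forall>n\<ge>N. \<forall>y. y \<le> b' \<and> supnorm y \<ge> K \<longrightarrow>
             sig0 n \<omega> (real n *\<^sub>R y) \<le> ereal (- C * real n * supnorm y powr (real CARD('d) / (real CARD('d) + 1)))))"
    and "T > 0" and "vless 0 b"
  shows "AE \<omega> in M. \<exists>N::nat. \<exists>a::real^'d. \<forall>x\<in>{-b..b}. \<forall>t\<in>{0<..T}. \<forall>n\<ge>N.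
           lpp_evolve (P \<omega>) (sig0 n \<omega>) (real n *\<^sub>R x) (real n * t)
         = (SUP y \<in> {a..x}. sig0 n \<omega> (real n *\<^sub>R y) + lpp_H (P \<omega>) (real n *\<^sub>R y) (real n *\<^sub>R x) (real n * t))"
proof -
  \<comment> \<open>Only (12) at \<open>-b\<close> and (13) for the given \<open>b\<close> are needed.\<close>
  define \<theta> where "\<theta> = real CARD('d) / (real CARD('d) + 1)"
  obtain \<Lambda> where "\<Lambda> > 0" and H: "AE \<omega> in M. eventually (lpp_H_growth_bound (P \<omega>) T \<Lambda> \<theta>) sequentially"
    using lpp_H_growth_AE[OF assms(1,3) \<open>T > 0\<close>] unfolding \<theta>_def by blast
  note far = hyp13[rule_format, OF add_pos_pos[OF \<open>\<Lambda> > 0\<close> zero_less_one], of b, folded \<theta>_def]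
  have "0 < \<theta>" by (simp add: \<theta>_def)
  show ?thesis using H far hyp12[rule_format, of "- b"]
  proof eventually_elim
    case (elim \<omega>)
    then obtain K where "eventually (\<lambda>n. \<forall>y. y \<le> b \<and> K \<le> supnorm y \<longrightarrow>
        sig0 n \<omega> (real n *\<^sub>R y) \<le> ereal (- (\<Lambda> + 1) * real n * supnorm y powr \<theta>)) sequentially"
      by (auto simp: eventually_sequentially)
    from lpp_evolve_eq_SUP_eventually[where \<sigma>="\<lambda>n. sig0 n \<omega>", OF \<open>0 < \<theta>\<close> elim(1) this elim(3)]
    show ?case unfolding eventually_sequentially by blast
  qed
qed

end
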